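(* Consider the faulty-starter delivery problem described in the context, with finisher starting position $(x,y)\neq(0,0)$, $y\ge0$. The hybrid algorithm $\mathcal{H}$ described in the context is optimal: for every online algorithm $\mathcal{A}$, $\mathrm{CR}_{\mathcal{H}}\le\mathrm{CR}_{\mathcal{A}}$.
   Context: Setting. In the plane let $S=(0,0)$ and $T=(1,0)$. A "starter" drone carrying a package starts at $S$ at time $0$ and moves at unit speed along $\overline{ST}$ towards $T$. At an unknown time $t\in[0,1]$ it fails and stays forever at $(t,0)$ with the package (at time $s$ the package is at $(\min\{s,t\},0)$). A "finisher" drone starts at time $0$ at $P=(x,y)$ with $y\ge0$, moves at unit speed and can stop and turn instantaneously. The package can be handed over only when the drones are co-located; it is delivered at the first time the finisher, carrying the package, is at $T$. An online algorithm $\mathcal{A}$ specifies the finisher's trajectory using only $(x,y)$ (not $t$); $A(t)$ is its delivery time for fail time $t$. $\mathrm{Opt}(t)=\max\{1,\sqrt{(x-t)^2+y^2}+1-t\}$ is the optimal offline delivery time. $\mathrm{CR}_{\mathcal{A}}(t)=A(t)/\mathrm{Opt}(t)$ and $\mathrm{CR}_{\mathcal{A}}=\sup_{0\le t\le1}\mathrm{CR}_{\mathcal{A}}(t)$. Candidate algorithms. $\mathcal{A}_0$: the finisher goes straight to $S$, then along $\overline{ST}$ towards $T$ until it finds the package, then on to $T$. $\mathcal{A}_1$: the finisher goes straight to $T$, then along the segment towards $S$ until it finds the package, then returns to $T$. $\mathcal{A}_d$ (for $x>0$): with $d=(x^2+y^2)/(2x)$, the finisher goes straight to $(d,0)$,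 then towards $S$ along the segment until it finds the package, then goes to $T$. Hybrid algorithm $\mathcal{H}$: if $(x-1)^2+y^2>1$, execute $\mathcal{A}_0$ if $\mathrm{CR}_{\mathcal{A}_0}\le\mathrm{CR}_{\mathcal{A}_1}$ and $\mathcal{A}_1$ otherwise; if $(x-1)^2+y^2\le1$, execute $\mathcal{A}_0$ if $\mathrm{CR}_{\mathcal{A}_0}\le\mathrm{CR}_{\mathcal{A}_d}$ and $\mathcal{A}_d$ otherwise. *)

theory Defs
  imports "HOL-Analysis.Analysis"
begin

definition S_pt :: "real \<times> real" where "S_pt = (0, 0)"
definition T_pt :: "real \<times> real" where "T_pt = (1, 0)"

text \<open>Position of the package at time s when the starter fails at time t.\<close>
definition pkg :: "real \<Rightarrow> real \<Rightarrow> real \<times> real" where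
  "pkg t s = (min s t, 0)"

definition admissible :: "real \<Rightarrow> real \<Rightarrow> (real \<Rightarrow> real \<times> real) \<Rightarrow> bool" where
  "admissible x y f \<longleftrightarrow> f 0 = (x, y) \<and>
     (\<forall>s1 s2. 0 \<le> s1 \<longrightarrow> 0 \<le> s2 \<longrightarrow> dist (f s1) (f s2) \<le> \<bar>s1 - s2\<bar>)"

text \<open>Delivery time of an online algorithm with pre-pickup trajectory f for fail time t:
  the package is picked up at a meeting time s, after which the finisher goes
  straight to T (which is optimal once the package is carried).  Infinite if
  the finisher never meets the package.\<close>
definition delivery :: "(real \<Rightarrow> real \<times> real) \<Rightarrow> real \<Rightarrow> ereal" where
  "delivery f t = Inf ((\<lambda>s. ereal (s + dist (f s) T_pt)) ` {s. 0 \<le> s \<and> f s = pkg t s})"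

definition Opt :: "real \<Rightarrow> real \<Rightarrow> real \<Rightarrow> real" where
  "Opt x y t = max 1 (sqrt ((x - t)\<^sup>2 + y\<^sup>2) + 1 - t)"

definition CR :: "real \<Rightarrow> real \<Rightarrow> (real \<Rightarrow> real \<times> real) \<Rightarrow> ereal" where
  "CR x y f = (SUP t\<in>{0..1}. delivery f t / ereal (Opt x y t))"

fun walk :: "(real \<times> real) list \<Rightarrow> real \<Rightarrow> real \<times> real" where
  "walk [] s = (0, 0)"
| "walk [p] s = p"
| "walk (p # q # ps) s =
     (if s \<le> dist p q then p + (s / dist p q) *\<^sub>R (q - p) else walk (q # ps) (s - dist p q))"

definition alg0 :: "real \<Rightarrow> real \<Rightarrow> real \<Rightarrow> real \<times> real" where
  "alg0 x y = walk [(x, y), S_pt, T_pt]"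

definition alg1 :: "real \<Rightarrow> real \<Rightarrow> real \<Rightarrow> real \<times> real" where
  "alg1 x y = walk [(x, y), T_pt, S_pt]"

definition dpar :: "real \<Rightarrow> real \<Rightarrow> real" where
  "dpar x y = (x\<^sup>2 + y\<^sup>2) / (2 * x)"

definition algd :: "real \<Rightarrow> real \<Rightarrow> real \<Rightarrow> real \<times> real" where
  "algd x y = walk [(x, y), (dpar x y, 0), S_pt]"

definition hybrid :: "real \<Rightarrow> real \<Rightarrow> real \<Rightarrow> real \<times> real" where
  "hybrid x y =
     (if (x - 1)\<^sup>2 + y\<^sup>2 > 1
      then (if CR x y (alg0 x y) \<le> CR x y (alg1 x y) then alg0 x y else alg1 x y)
      else (if CR x y (alg0 x y) \<le> CR x y (algd x y) then alg0 x y else algd x y))"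

end

(*
  Compare an arbitrary finisher f with the candidate algorithms through the order in which
  f picks up the packages with fail times 0 (resting at S), t and 1 (resting at T).

  If f visits S before it can pick up package 1, then for fail time 1 it needs at least
  |PS| + 1, which is the delivery time of A_0 for every fail time.

  Otherwise let c be the turning point of A_1 (c = 1, outside the unit disc around T) or of
  A_d (c = d, inside it); no finisher catches the moving package before it has passed c.
  For a fail time t < c, either f picks up package 1 before package t, and then it delivers
  package t no earlier than A_c does, or it picks up package t first, and then for fail
  time 0 it travels P -> t -> 1 -> S -> T, which takes at least Opt(t) + 2.  In the second
  case the ratio of A_c at t is still dominated, by an inequality between |PS|, |Pt| and
  |Pc| that follows from Stewart's theorem and a polynomial certificate.
*)

theory Submission
  imports Defs
begin

section \<open>Distances from P to the axis\<close>

definition axis_dist :: "real \<Rightarrow> real \<Rightarrow> real \<Rightarrow> real" where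
  "axis_dist x y a = dist (x, y) (a, 0)"

lemma dist_axis_points: "dist (a, 0) (b, 0 :: real) = \<bar>a - b\<bar>"
  by (simp add: dist_Pair_Pair dist_real_def)

lemma axis_dist_nonneg: "0 \<le> axis_dist x y a"
  by (simp add: axis_dist_def)

lemma axis_dist_sq: "(axis_dist x y a)\<^sup>2 = (x - a)\<^sup>2 + y\<^sup>2"
  by (simp add: axis_dist_def dist_Pair_Pair dist_real_def)

lemma axis_dist_triangle: "axis_dist x y a \<le> axis_dist x y b + \<bar>a - b\<bar>"
  using dist_triangle[of "(x, y)" "(a, 0)" "(b, 0)"]
  by (simp add: axis_dist_def dist_axis_points abs_minus_commute)

lemma axis_dist_stewart:
  "(c - t) * (axis_dist x y 0)\<^sup>2 + t * (axis_dist x y c)\<^sup>2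
     = c * ((axis_dist x y t)\<^sup>2 + t * (c - t))"
  unfolding axis_dist_sq by (simp add: power2_eq_square algebra_simps)

lemma axis_dist_gt_before:
  assumes "(x, y) \<noteq> (0, 0)" "0 \<le> a" "a < c" "c \<le> axis_dist x y c"
  shows "a < axis_dist x y a"
proof -
  have sq_diff: "(axis_dist x y b)\<^sup>2 - b\<^sup>2 = x\<^sup>2 + y\<^sup>2 - 2 * x * b" for b
    unfolding axis_dist_sq by (simp add: power2_eq_square algebra_simps)
  have "c\<^sup>2 \<le> (axis_dist x y c)\<^sup>2"
    using assms(2-4) by (intro power_mono) auto
  then have c_le: "2 * x * c \<le> x\<^sup>2 + y\<^sup>2"
    using sq_diff[of c] by linarith
  have pos: "0 < x\<^sup>2 + y\<^sup>2"
    using assms(1) by (simp add: sum_power2_gt_zero_iff)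
  have "2 * x * a < x\<^sup>2 + y\<^sup>2"
  proof (cases "0 < x")
    case True
    then have "2 * x * a < 2 * x * c"
      using assms(3) by simp
    with c_le show ?thesis by linarith
  next
    case False
    then have "2 * x * a \<le> 0"
      using assms(2) by (simp add: mult_nonpos_nonneg)
    with pos show ?thesis by linarith
  qed
  then have "a\<^sup>2 < (axis_dist x y a)\<^sup>2"
    using sq_diff[of a] by linarith
  then show ?thesis
    using axis_dist_nonneg by (rule power_less_imp_less_base)
qed

lemma Opt_eq_axis_dist: "Opt x y t = max 1 (axis_dist x y t + 1 - t)"
  by (simp add: Opt_def axis_dist_def dist_Pair_Pair dist_real_def)

lemma Opt_ge_1: "1 \<le> Opt x y t"
  by (simp add: Opt_def)

lemma Opt_1_le: "t \<le> 1 \<Longrightarrow> Opt x y 1 \<le> Opt x y t"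
  using axis_dist_triangle[of x y 1 t] by (auto simp: Opt_eq_axis_dist)

lemma disc_dpar:
  assumes "(x - 1)\<^sup>2 + y\<^sup>2 \<le> 1" "(x, y) \<noteq> (0, 0)"
  shows "0 < x" "dpar x y \<le> 1" "axis_dist x y (dpar x y) = dpar x y"
proof -
  have le: "x\<^sup>2 + y\<^sup>2 \<le> 2 * x"
    using assms(1) by (simp add: power2_eq_square algebra_simps)
  moreover have "0 < x\<^sup>2 + y\<^sup>2"
    using assms(2) by (simp add: sum_power2_gt_zero_iff)
  ultimately show x: "0 < x" by linarith
  show "dpar x y \<le> 1"
    using le x by (simp add: dpar_def)
  have "(axis_dist x y (dpar x y))\<^sup>2 = (dpar x y)\<^sup>2"
    using x unfolding axis_dist_sq by (simp add: dpar_def field_simps power2_eq_square)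
  then show "axis_dist x y (dpar x y) = dpar x y"
    using x axis_dist_nonneg by (simp add: power2_eq_iff_nonneg dpar_def)
qed

section \<open>The ratio inequality\<close>

(* Found by writing both sides as homogeneous polynomials in t, a, b, w, n (replacing 1 by
   t + a + b + n): all coefficients of the difference are nonnegative except that of t a b^3. *)
lemma turn_ratio_certificate:
  fixes t a b w n c rc p :: real
  assumes "0 \<le> t" "0 \<le> a" "0 \<le> b" "0 \<le> w" "0 \<le> n"
    and "t + a + b + n = 1" "c = t + a + b" "rc = c + w" "p = t + 2 * a + w"
  shows "(rc + c + 1 - 2 * t)\<^sup>2 * (c * (p\<^sup>2 + t * (c - t)) - t * rc\<^sup>2)
    \<le> (c - t) * ((p + 1 - t) * (p + 3 - t) - (rc + c + 1 - 2 * t))\<^sup>2"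
proof -
  let ?H = "t^4*b + 2*t^3*a^2 + 5*t^3*a*b + 2*t^3*a*n + 2*t^3*b^2 + 3*t^3*b*w + 4*t^3*b*n
    + 15*t^2*a^3 + 18*t^2*a^2*b + 5*t^2*a^2*w + 20*t^2*a^2*n + 4*t^2*a*b^2 + 13*t^2*a*b*w
    + 28*t^2*a*b*n + 5*t^2*a*w*n + 5*t^2*a*n^2 + 6*t^2*b^2*w + 6*t^2*b^2*n + 3*t^2*b*w^2
    + 9*t^2*b*w*n + 6*t^2*b*n^2 + 36*t*a^4 + 55*t*a^3*b + 24*t*a^3*w + 60*t*a^3*n
    + 18*t*a^2*b^2 + 37*t*a^2*b*w + 90*t*a^2*b*n + 4*t*a^2*w^2 + 32*t*a^2*w*n
    + 28*t*a^2*n^2 + 16*t*a*b^2*w + 32*t*a*b^2*n + 9*t*a*b*w^2 + 46*t*a*b*w*n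
    + 35*t*a*b*n^2 + 4*t*a*w^2*n + 8*t*a*w*n^2 + 4*t*a*n^3 + 3*t*b^3*w + 2*t*b^3*n
    + 4*t*b^2*w^2 + 12*t*b^2*w*n + 6*t*b^2*n^2 + t*b*w^3 + 6*t*b*w^2*n + 9*t*b*w*n^2
    + 4*t*b*n^3 + 27*a^5 + 57*a^4*b + 27*a^4*w + 54*a^4*n + 37*a^3*b^2 + 49*a^3*b*w
    + 100*a^3*b*n + 9*a^3*w^2 + 45*a^3*w*n + 36*a^3*n^2 + 25*a^2*b^2*w + 54*a^2*b^2*n
    + 13*a^2*b*w^2 + 73*a^2*b*w*n + 54*a^2*b*n^2 + a^2*w^3 + 12*a^2*w^2*n + 21*a^2*w*n^2
    + 10*a^2*n^3 + 3*a*b^3*w + 8*a*b^3*n + 4*a*b^2*w^2 + 31*a*b^2*w*n + 19*a*b^2*n^2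
    + a*b*w^3 + 16*a*b*w^2*n + 27*a*b*w*n^2 + 12*a*b*n^3 + a*w^3*n + 3*a*w^2*n^2
    + 3*a*w*n^3 + a*n^4 + 3*b^3*w*n + b^3*n^2 + 4*b^2*w^2*n + 6*b^2*w*n^2 + 2*b^2*n^3
    + b*w^3*n + 3*b*w^2*n^2 + 3*b*w*n^3 + b*n^4"
  have identity: "(c - t) * ((p + 1 - t) * (p + 3 - t) - (rc + c + 1 - 2 * t))\<^sup>2
      - (rc + c + 1 - 2 * t)\<^sup>2 * (c * (p\<^sup>2 + t * (c - t)) - t * rc\<^sup>2)
    = 4 * ?H + 4 * b ^ 3 * (7 * a\<^sup>2 - t * a + t\<^sup>2)"
    using assms(6-9) by algebra
  have H_nonneg: "0 \<le> ?H"
    using assms(1-5) by (intro add_nonneg_nonneg mult_nonneg_nonneg zero_le_power) simp_all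
  have "7 * a\<^sup>2 - t * a + t\<^sup>2 = (t - a / 2)\<^sup>2 + 27 / 4 * a\<^sup>2"
    by (simp add: power2_eq_square algebra_simps)
  then have "0 \<le> 4 * b ^ 3 * (7 * a\<^sup>2 - t * a + t\<^sup>2)"
    using assms(3) by simp
  then have "0 \<le> 4 * ?H + 4 * b ^ 3 * (7 * a\<^sup>2 - t * a + t\<^sup>2)"
    using H_nonneg by (intro add_nonneg_nonneg) simp_all
  then show ?thesis
    unfolding identity[symmetric] by (simp only: diff_ge_0_iff_ge)
qed

(* r0, p and rc stand for the distances from P to (0,0), (t,0) and (c,0); the last
   hypothesis is Stewart's theorem for them. *)
lemma turn_ratio_bound:
  fixes t c r0 rc p :: real
  assumes "0 \<le> t" "t < c" "c \<le> 1" "c \<le> rc" "\<bar>p - rc\<bar> \<le> c - t" "0 \<le> r0"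
    and stewart: "(c - t) * r0\<^sup>2 + t * rc\<^sup>2 = c * (p\<^sup>2 + t * (c - t))"
  shows "(rc + c + 1 - 2 * t) * (1 + r0) \<le> (p + 1 - t) * (p + 3 - t)"
proof -
  define L where "L = rc + c + 1 - 2 * t"
  define R where "R = (p + 1 - t) * (p + 3 - t)"
  have stewart': "(c - t) * r0\<^sup>2 = c * (p\<^sup>2 + t * (c - t)) - t * rc\<^sup>2"
    using stewart by linarith
  have "(c - t) * (L * r0)\<^sup>2 = L\<^sup>2 * ((c - t) * r0\<^sup>2)"
    by (simp add: power_mult_distrib)
  also have "\<dots> = L\<^sup>2 * (c * (p\<^sup>2 + t * (c - t)) - t * rc\<^sup>2)"
    by (simp only: stewart')
  also have "\<dots> \<le> (c - t) * (R - L)\<^sup>2"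
    unfolding L_def R_def
    by (rule turn_ratio_certificate[where a = "(p + c - t - rc) / 2" and b = "(rc + c - t - p) / 2"
          and w = "rc - c" and n = "1 - c"])
      (use assms(1-5) in \<open>auto simp: field_simps\<close>)
  finally have "(c - t) * (L * r0)\<^sup>2 \<le> (c - t) * (R - L)\<^sup>2" .
  then have "(L * r0)\<^sup>2 \<le> (R - L)\<^sup>2"
    using assms(2) by simp
  moreover have "0 \<le> R - L"
  proof -
    have "R = (p - t)\<^sup>2 + 4 * (p - t) + 3"
      by (simp add: R_def power2_eq_square algebra_simps)
    then have "4 * (p - t) + 3 \<le> R"
      by simp
    then show ?thesis
      using assms(1,3-5) unfolding L_def by (auto simp: abs_le_iff)
  qed
  ultimately have "L * r0 \<le> R - L"
    by (rule power2_le_imp_le)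
  then show ?thesis
    unfolding L_def R_def by (simp add: algebra_simps)
qed

lemma axis_dist_turn_ratio:
  assumes "0 \<le> t" "t < c" "c \<le> 1" "c \<le> axis_dist x y c"
  shows "(axis_dist x y c + c + 1 - 2 * t) * (1 + axis_dist x y 0)
    \<le> (axis_dist x y t + 1 - t) * (axis_dist x y t + 3 - t)"
proof (rule turn_ratio_bound)
  show "\<bar>axis_dist x y t - axis_dist x y c\<bar> \<le> c - t"
    using axis_dist_triangle[of x y t c] axis_dist_triangle[of x y c t] assms(2)
    by (simp add: abs_le_iff abs_minus_commute)
qed (use assms axis_dist_nonneg axis_dist_stewart in auto)

section \<open>Trajectories, delivery times and competitive ratios\<close>

lemma admissible_axis_reach:
  assumes "admissible x y f" "0 \<le> s" "f s = (a, 0)"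
  shows "axis_dist x y a \<le> s"
proof -
  have "dist (f 0) (f s) \<le> \<bar>0 - s\<bar>"
    using assms(1,2) unfolding admissible_def by auto
  then show ?thesis
    using assms by (simp add: admissible_def axis_dist_def)
qed

lemma admissible_axis_lipschitz:
  assumes "admissible x y f" "0 \<le> s" "0 \<le> s'" "f s = (a, 0)" "f s' = (b, 0)"
  shows "\<bar>a - b\<bar> \<le> \<bar>s - s'\<bar>"
proof -
  have "dist (f s) (f s') \<le> \<bar>s - s'\<bar>"
    using assms(1-3) unfolding admissible_def by auto
  then show ?thesis
    using assms(4,5) by (simp add: dist_axis_points)
qed

lemma delivery_le:
  assumes "0 \<le> s" "f s = (a, 0)" "pkg t s = (a, 0)"
  shows "delivery f t \<le> ereal (s + \<bar>a - 1\<bar>)"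
proof -
  have "f s = pkg t s"
    using assms(2,3) by simp
  then have "delivery f t \<le> ereal (s + dist (f s) T_pt)"
    unfolding delivery_def using assms(1) by (auto intro!: Inf_lower)
  then show ?thesis
    using assms(2) by (simp add: T_pt_def dist_axis_points)
qed

lemma delivery_ge:
  assumes "t \<le> 1" "\<And>s. 0 \<le> s \<Longrightarrow> f s = (min s t, 0) \<Longrightarrow> L \<le> s + 1 - min s t"
  shows "ereal L \<le> delivery f t"
  unfolding delivery_def
proof (rule Inf_greatest)
  fix z assume "z \<in> (\<lambda>s. ereal (s + dist (f s) T_pt)) ` {s. 0 \<le> s \<and> f s = pkg t s}"
  then obtain s where s: "0 \<le> s" "f s = pkg t s" and z: "z = ereal (s + dist (f s) T_pt)"
    by auto
  then have fs: "f s = (min s t, 0)"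
    by (simp add: pkg_def)
  then have "L \<le> s + 1 - min s t"
    using assms(2) s(1) by blast
  then show "ereal L \<le> z"
    using z fs assms(1) by (simp add: T_pt_def dist_axis_points)
qed

lemma CR_ge:
  assumes "0 \<le> t" "t \<le> 1" "ereal L \<le> delivery f t"
  shows "ereal (L / Opt x y t) \<le> CR x y f"
proof -
  have Opt: "0 < Opt x y t"
    using Opt_ge_1[of x y t] by linarith
  then have "ereal (L / Opt x y t) = ereal L / ereal (Opt x y t)"
    by simp
  also have "\<dots> \<le> delivery f t / ereal (Opt x y t)"
    using assms(3) Opt by (intro ereal_divide_right_mono) auto
  also have "\<dots> \<le> CR x y f"
    unfolding CR_def using assms(1,2) by (intro SUP_upper) auto
  finally show ?thesis .
qed

lemma CR_le:
  assumes "\<And>t. 0 \<le> t \<Longrightarrow> t \<le> 1 \<Longrightarrow> delivery g t \<le> ereal (v t)"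
    and "\<And>t. 0 \<le> t \<Longrightarrow> t \<le> 1 \<Longrightarrow> ereal (v t / Opt x y t) \<le> B"
  shows "CR x y g \<le> B"
  unfolding CR_def
proof (rule SUP_least)
  fix t :: real assume "t \<in> {0..1}"
  then have t: "0 \<le> t" "t \<le> 1" by auto
  have Opt: "0 < Opt x y t"
    using Opt_ge_1[of x y t] by linarith
  then have "delivery g t / ereal (Opt x y t) \<le> ereal (v t / Opt x y t)"
    using assms(1)[OF t] ereal_divide_right_mono[of _ _ "ereal (Opt x y t)"] by fastforce
  also have "\<dots> \<le> B"
    using assms(2)[OF t] .
  finally show "delivery g t / ereal (Opt x y t) \<le> B" .
qed

lemma delivery_ge_Opt:
  assumes "admissible x y f" "0 \<le> t" "t \<le> 1"
  shows "ereal (Opt x y t) \<le> delivery f t"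
proof (rule delivery_ge)
  fix s assume s: "0 \<le> s" "f s = (min s t, 0)"
  have "axis_dist x y (min s t) \<le> s"
    using admissible_axis_reach[OF assms(1) s] .
  moreover have "axis_dist x y t \<le> axis_dist x y (min s t) + (t - min s t)"
    using axis_dist_triangle[of x y t "min s t"] by simp
  ultimately show "Opt x y t \<le> s + 1 - min s t"
    unfolding Opt_eq_axis_dist by auto
qed (use assms in auto)

lemma CR_ge_1:
  assumes "admissible x y f"
  shows "1 \<le> CR x y f"
proof -
  have "ereal (Opt x y 0 / Opt x y 0) \<le> CR x y f"
    by (rule CR_ge[OF _ _ delivery_ge_Opt[OF assms]]) auto
  then show ?thesis
    using Opt_ge_1[of x y 0] by (simp add: one_ereal_def)
qed

section \<open>Delivery times of the candidate algorithms\<close>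

lemma walk_start: "walk (p # ps) 0 = p"
  by (cases ps) auto

lemma walk_after_first_leg:
  assumes "0 \<le> s"
  shows "walk (p # q # ps) (dist p q + s) = walk (q # ps) s"
proof (cases "s = 0")
  case True
  then show ?thesis
    by (cases "p = q") (simp_all add: walk_start)
next
  case False
  with assms show ?thesis
    by simp
qed

lemma walk_axis_segment:
  assumes "0 \<le> s" "s \<le> \<bar>b - a\<bar>"
  shows "walk [(a, 0), (b, 0)] s = (a + sgn (b - a) * s, 0)"
proof (cases "a = b")
  case True
  with assms show ?thesis
    by simp
next
  case False
  with assms show ?thesis
    by (simp add: dist_axis_points abs_minus_commute sgn_real_def field_simps)
qed

lemma delivery_alg0:
  assumes "0 \<le> t" "t \<le> 1"
  shows "delivery (alg0 x y) t \<le> ereal (axis_dist x y 0 + 1)"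
proof -
  let ?s = "axis_dist x y 0 + t"
  have "alg0 x y ?s = walk [(0, 0), (1, 0)] t"
    unfolding alg0_def axis_dist_def S_pt_def T_pt_def using assms(1) by (rule walk_after_first_leg)
  also have "\<dots> = (t, 0)"
    using walk_axis_segment[of t 1 0] assms by simp
  finally have "delivery (alg0 x y) t \<le> ereal (?s + \<bar>t - 1\<bar>)"
    using assms(1) axis_dist_nonneg[of x y 0] by (intro delivery_le) (auto simp: pkg_def)
  then show ?thesis
    using assms(2) by simp
qed

lemma delivery_turn:
  assumes "0 \<le> t" "t \<le> c" "t \<le> 1" "c \<le> axis_dist x y c"
  shows "delivery (walk [(x, y), (c, 0), S_pt]) t \<le> ereal (axis_dist x y c + c + 1 - 2 * t)"
proof -
  let ?s = "axis_dist x y c + (c - t)"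
  have "walk [(x, y), (c, 0), S_pt] ?s = walk [(c, 0), (0, 0)] (c - t)"
    unfolding axis_dist_def S_pt_def using assms(2) by (intro walk_after_first_leg) simp
  also have "\<dots> = (t, 0)"
    using walk_axis_segment[of "c - t" 0 c] assms(1,2) by (cases "c = 0") auto
  finally have "delivery (walk [(x, y), (c, 0), S_pt]) t \<le> ereal (?s + \<bar>t - 1\<bar>)"
    using assms by (intro delivery_le) (auto simp: pkg_def)
  then show ?thesis
    using assms(3) by (simp add: algebra_simps)
qed

lemma delivery_turn_late:
  assumes "axis_dist x y c = c" "c \<le> t" "c \<le> 1"
  shows "delivery (walk [(x, y), (c, 0), S_pt]) t \<le> 1"
proof -
  have "walk [(x, y), (c, 0), S_pt] (dist (x, y) (c, 0) + 0) = walk [(c, 0), S_pt] 0"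
    by (rule walk_after_first_leg) simp
  then have "walk [(x, y), (c, 0), S_pt] c = (c, 0)"
    using assms(1) unfolding axis_dist_def walk_start add_0_right by simp
  moreover have "0 \<le> c"
    using axis_dist_nonneg[of x y c] assms(1) by simp
  ultimately have "delivery (walk [(x, y), (c, 0), S_pt]) t \<le> ereal (c + \<bar>c - 1\<bar>)"
    using assms(2) by (intro delivery_le) (auto simp: pkg_def)
  then show ?thesis
    using assms(3) by (simp add: one_ereal_def)
qed

section \<open>Lower bounds for an arbitrary finisher\<close>

(* The package with fail time 0 rests at S, so meets_first f 0 1 says that f visits S
   before it picks up the package with fail time 1. *)
definition meets_first :: "(real \<Rightarrow> real \<times> real) \<Rightarrow> real \<Rightarrow> real \<Rightarrow> bool" where
  "meets_first f t u \<longleftrightarrow>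
     (\<exists>s\<ge>0. f s = pkg t s \<and> (\<forall>s'\<ge>0. f s' = pkg u s' \<longrightarrow> s \<le> s'))"

lemma meeting_time_ge:
  assumes "admissible x y f" "(x, y) \<noteq> (0, 0)" "c \<le> axis_dist x y c"
    and "0 \<le> s" "f s = (min s u, 0)"
  shows "min c u \<le> s"
proof (rule ccontr)
  assume "\<not> min c u \<le> s"
  then have "s < c" "min s u = s"
    by auto
  then have "axis_dist x y s \<le> s"
    using admissible_axis_reach[OF assms(1,4)] assms(5) by simp
  moreover have "s < axis_dist x y s"
    using axis_dist_gt_before[OF assms(2,4) \<open>s < c\<close> assms(3)] .
  ultimately show False
    by simp
qed

lemma not_meets_first_D:
  assumes "\<not> meets_first f t u" "0 \<le> s" "f s = (min s t, 0)"
  obtains s' where "0 \<le> s'" "s' < s" "f s' = (min s' u, 0)"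
  using assms by (force simp: meets_first_def pkg_def not_le)

lemma CR_alg0_le:
  assumes adm: "admissible x y f" and S_first: "meets_first f 0 1"
  shows "CR x y (alg0 x y) \<le> CR x y f"
proof -
  obtain s0 where s0: "0 \<le> s0" "f s0 = (0, 0)"
    and first: "\<And>s. 0 \<le> s \<Longrightarrow> f s = (min s 1, 0) \<Longrightarrow> s0 \<le> s"
    using S_first by (auto simp: meets_first_def pkg_def)
  have "ereal (axis_dist x y 0 + 1) \<le> delivery f 1"
  proof (rule delivery_ge)
    fix s assume s: "0 \<le> s" "f s = (min s 1, 0)"
    have "\<bar>min s 1 - 0\<bar> \<le> \<bar>s - s0\<bar>"
      using admissible_axis_lipschitz[OF adm s(1) s0(1) s(2) s0(2)] .
    moreover have "s0 \<le> s"
      using first[OF s] .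
    moreover have "axis_dist x y 0 \<le> s0"
      using admissible_axis_reach[OF adm s0] .
    ultimately show "axis_dist x y 0 + 1 \<le> s + 1 - min s 1"
      using s(1) by auto
  qed simp
  then have bound: "ereal ((axis_dist x y 0 + 1) / Opt x y 1) \<le> CR x y f"
    by (intro CR_ge) auto
  show ?thesis
  proof (rule CR_le[where v = "\<lambda>_. axis_dist x y 0 + 1"])
    fix t :: real assume t: "0 \<le> t" "t \<le> 1"
    show "delivery (alg0 x y) t \<le> ereal (axis_dist x y 0 + 1)"
      using delivery_alg0[OF t] .
    have "(axis_dist x y 0 + 1) / Opt x y t \<le> (axis_dist x y 0 + 1) / Opt x y 1"
      using Opt_1_le[OF t(2), of x y] Opt_ge_1[of x y 1] Opt_ge_1[of x y t] axis_dist_nonneg[of x y 0]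
      by (intro divide_left_mono mult_pos_pos) auto
    then show "ereal ((axis_dist x y 0 + 1) / Opt x y t) \<le> CR x y f"
      using bound by (meson ereal_less_eq(3) order_trans)
  qed
qed

lemma delivery_ge_turn:
  assumes adm: "admissible x y f" and P: "(x, y) \<noteq> (0, 0)"
    and c: "c \<le> 1" "c \<le> axis_dist x y c" and t: "0 \<le> t" "t < c"
    and t_late: "\<not> meets_first f t 1"
  shows "ereal (axis_dist x y c + c + 1 - 2 * t) \<le> delivery f t"
proof (rule delivery_ge)
  fix s assume s: "0 \<le> s" "f s = (min s t, 0)"
  have "t \<le> s"
    using meeting_time_ge[OF adm P c(2) s] t by simp
  then have fs: "f s = (t, 0)"
    using s(2) by simp
  obtain s1 where s1: "0 \<le> s1" "s1 < s" "f s1 = (min s1 1, 0)"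
    using not_meets_first_D[OF t_late s] .
  define q where "q = min s1 1"
  have "c \<le> q"
    using meeting_time_ge[OF adm P c(2) s1(1,3)] c(1) by (simp add: q_def)
  have "axis_dist x y q \<le> s1"
    using admissible_axis_reach[OF adm s1(1)] s1(3) by (simp add: q_def)
  moreover have "axis_dist x y c \<le> axis_dist x y q + (q - c)"
    using axis_dist_triangle[of x y c q] \<open>c \<le> q\<close> by simp
  moreover have "\<bar>t - q\<bar> \<le> \<bar>s - s1\<bar>"
    using admissible_axis_lipschitz[OF adm s(1) s1(1) fs] s1(3) by (simp add: q_def)
  ultimately show "axis_dist x y c + c + 1 - 2 * t \<le> s + 1 - min s t"
    using \<open>t \<le> s\<close> \<open>c \<le> q\<close> s1(2) t by auto
qed (use t c in linarith)

(* For fail time 0, f first walks to (t,0), then to T, and only then comes back to S. *)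
lemma delivery_ge_detour:
  assumes adm: "admissible x y f" and P: "(x, y) \<noteq> (0, 0)"
    and c: "c \<le> 1" "c \<le> axis_dist x y c" and t: "0 \<le> t" "t < c"
    and t_first: "meets_first f t 1" and S_late: "\<not> meets_first f 0 1"
  shows "ereal (axis_dist x y t + 3 - t) \<le> delivery f 0"
proof -
  obtain s where s: "0 \<le> s" "f s = (min s t, 0)"
    and first: "\<And>s'. 0 \<le> s' \<Longrightarrow> f s' = (min s' 1, 0) \<Longrightarrow> s \<le> s'"
    using t_first by (auto simp: meets_first_def pkg_def)
  have "t \<le> s"
    using meeting_time_ge[OF adm P c(2) s] t by simp
  then have fs: "f s = (t, 0)"
    using s(2) by simp
  have reach: "axis_dist x y t \<le> s"
    using admissible_axis_reach[OF adm s(1) fs] .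
  have "t < axis_dist x y t"
    using axis_dist_gt_before[OF P t c(2)] .
  show ?thesis
  proof (rule delivery_ge)
    fix s0 assume s0: "0 \<le> s0" "f s0 = (min s0 0, 0)"
    then have fs0: "f s0 = (0, 0)"
      by simp
    obtain s1 where s1: "0 \<le> s1" "s1 < s0" "f s1 = (min s1 1, 0)"
      using not_meets_first_D[OF S_late s0] .
    have "s \<le> s1"
      using first[OF s1(1,3)] .
    have to_1: "\<bar>t - min s1 1\<bar> \<le> \<bar>s - s1\<bar>"
      using admissible_axis_lipschitz[OF adm s(1) s1(1) fs s1(3)] .
    have "1 \<le> s1"
    proof (rule ccontr)
      assume "\<not> 1 \<le> s1"
      then have "\<bar>t - s1\<bar> \<le> s1 - s"
        using to_1 \<open>s \<le> s1\<close> by simp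
      then show False
        using reach \<open>t < axis_dist x y t\<close> by auto
    qed
    then have "f s1 = (1, 0)"
      using s1(3) by simp
    then have "\<bar>0 - 1\<bar> \<le> \<bar>s0 - s1\<bar>"
      using admissible_axis_lipschitz[OF adm s0(1) s1(1) fs0] by simp
    then show "axis_dist x y t + 3 - t \<le> s0 + 1 - min s0 0"
      using to_1 \<open>1 \<le> s1\<close> \<open>s \<le> s1\<close> s1(2) reach s0(1) t c(1) by auto
  qed simp
qed

lemma turn_ratio_le_CR:
  assumes adm: "admissible x y f" and P: "(x, y) \<noteq> (0, 0)"
    and c: "c \<le> 1" "c \<le> axis_dist x y c" and S_late: "\<not> meets_first f 0 1"
    and t: "0 \<le> t" "t < c"
  shows "ereal ((axis_dist x y c + c + 1 - 2 * t) / Opt x y t) \<le> CR x y f"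
proof (cases "meets_first f t 1")
  case True
  have "t < axis_dist x y t"
    using axis_dist_gt_before[OF P t c(2)] .
  then have Opt_t: "Opt x y t = axis_dist x y t + 1 - t"
    by (simp add: Opt_eq_axis_dist)
  have Opt_0: "Opt x y 0 = axis_dist x y 0 + 1"
    using axis_dist_nonneg[of x y 0] by (simp add: Opt_eq_axis_dist)
  have "(axis_dist x y c + c + 1 - 2 * t) * Opt x y 0 \<le> (Opt x y t + 2) * Opt x y t"
    using axis_dist_turn_ratio[OF t c] unfolding Opt_t Opt_0 by (simp add: algebra_simps)
  then have "(axis_dist x y c + c + 1 - 2 * t) / Opt x y t \<le> (Opt x y t + 2) / Opt x y 0"
    using Opt_ge_1[of x y t] Opt_ge_1[of x y 0] by (simp add: divide_simps)
  moreover have "ereal ((Opt x y t + 2) / Opt x y 0) \<le> CR x y f"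
    using delivery_ge_detour[OF adm P c t True S_late] unfolding Opt_t
    by (intro CR_ge) (simp_all add: algebra_simps)
  ultimately show ?thesis
    by (meson ereal_less_eq(3) order_trans)
next
  case False
  then show ?thesis
    using CR_ge[OF t(1) _ delivery_ge_turn[OF adm P c t False]] t c(1) by simp
qed

(* A_1 and A_d are the cases c = 1 and c = d.  The disjunction excludes turning points the
   finisher reaches only after a package failing beyond them has already passed. *)
lemma CR_turn_le:
  assumes adm: "admissible x y f" and P: "(x, y) \<noteq> (0, 0)"
    and c: "c \<le> 1" "c \<le> axis_dist x y c" and turn: "c = 1 \<or> axis_dist x y c = c"
    and S_late: "\<not> meets_first f 0 1"
  shows "CR x y (walk [(x, y), (c, 0), S_pt]) \<le> CR x y f"
proof -
  define v where "v t = (if t \<le> c then axis_dist x y c + c + 1 - 2 * t else 1)" for t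
  show ?thesis
  proof (rule CR_le[where v = v])
    fix t :: real assume t: "0 \<le> t" "t \<le> 1"
    show "delivery (walk [(x, y), (c, 0), S_pt]) t \<le> ereal (v t)"
    proof (cases "t \<le> c")
      case True
      then show ?thesis
        using delivery_turn[OF t(1) True t(2) c(2)] by (simp add: v_def)
    next
      case False
      then have "axis_dist x y c = c"
        using turn t(2) by auto
      then show ?thesis
        using delivery_turn_late[of x y c t] False c(1) by (simp add: v_def one_ereal_def)
    qed
    show "ereal (v t / Opt x y t) \<le> CR x y f"
    proof (cases "t < c")
      case True
      then show ?thesis
        using turn_ratio_le_CR[OF adm P c S_late t(1) True] by (simp add: v_def)
    next
      case False
      then have "v t \<le> Opt x y t"
        using Opt_ge_1[of x y t] by (auto simp: v_def Opt_eq_axis_dist)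
      then have "ereal (v t / Opt x y t) \<le> 1"
        using Opt_ge_1[of x y t] by (simp add: one_ereal_def)
      then show ?thesis
        using CR_ge_1[OF adm] by (rule order_trans)
    qed
  qed
qed

lemma hybrid_CR_le:
  shows "CR x y (hybrid x y) \<le> CR x y (alg0 x y)"
    and "1 < (x - 1)\<^sup>2 + y\<^sup>2 \<Longrightarrow> CR x y (hybrid x y) \<le> CR x y (alg1 x y)"
    and "(x - 1)\<^sup>2 + y\<^sup>2 \<le> 1 \<Longrightarrow> CR x y (hybrid x y) \<le> CR x y (algd x y)"
  unfolding hybrid_def by auto

theorem theorem4:
  fixes x y :: real and f :: "real \<Rightarrow> real \<times> real"
  assumes "(x, y) \<noteq> (0, 0)" and "0 \<le> y" and "admissible x y f"
  shows "CR x y (hybrid x y) \<le> CR x y f"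
proof (cases "meets_first f 0 1")
  case True
  show ?thesis
    using hybrid_CR_le(1) CR_alg0_le[OF assms(3) True] by (rule order_trans)
next
  case S_late: False
  show ?thesis
  proof (cases "1 < (x - 1)\<^sup>2 + y\<^sup>2")
    case True
    then have "1 \<le> axis_dist x y 1"
      by (simp add: axis_dist_def dist_Pair_Pair dist_real_def real_le_rsqrt)
    then have "CR x y (alg1 x y) \<le> CR x y f"
      using CR_turn_le[OF assms(3,1) order_refl _ _ S_late] by (simp add: alg1_def T_pt_def)
    with hybrid_CR_le(2)[OF True] show ?thesis
      by (rule order_trans)
  next
    case False
    then have disc: "(x - 1)\<^sup>2 + y\<^sup>2 \<le> 1"
      by simp
    note d = disc_dpar[OF disc assms(1)]
    have "CR x y (algd x y) \<le> CR x y f"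
      using CR_turn_le[OF assms(3,1) d(2) _ _ S_late] d(3) by (simp add: algd_def)
    with hybrid_CR_le(3)[OF disc] show ?thesis
      by (rule order_trans)
  qed
qed

end
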